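(* For every $I\in\mathcal I$, there is exactly one $\vartriangleleft$-minimal set in $\mathcal M(I)$.
   Context: Let $(a_i)_{i=1,\dots,n}$ be a sequence of distinct integers between $1$ and $n$, and set $a_0=0$; write $A=(a_i)_{i=0,1,\dots,n}$. A set $I\subseteq\{0\}\cup[n]$ is feasible if $a_i<a_j$ for all $i,j\in I$ with $i<j$; $\mathcal I$ denotes the family of feasible sets of maximum cardinality. Patience sorting: start with empty piles $P_0,\dots,P_n$; for $i=0,1,\dots,n$ in order, put $a_i$ on top of the pile $P_j$ with smallest index $j$ such that $P_j$ is empty or the top element of $P_j$ is greater than $a_i$. Let $P_0,\dots,P_k$ be the resulting nonempty piles. Say $a_u$ is placed below $a_v$ on a pile if both lie on the same pile and $a_u$ was put there before $a_v$. For $I,J\in\mathcal I$, write $I\vartriangleleft J$ if $I\setminus J=\{u\}$ and $J\setminus I=\{v\}$ for some $u,v$ such that $a_u$ is placed strictly below $a_v$ on pile $P_i$ for some $1\le i\le k$. For $I\in\mathcal I$, $\mathcal M(I)\subseteq\mathcal I$ is the smallest family containing $I$ such that whenever $J\in\mathcal M(I)$ and $J'\vartriangleleft J$ then $J'\in\mathcal M(I)$ (the lower set of $I$ in the reflexive–transitive closure of $\vartriangleleft$). A set $I\in\mathcal I$ is $\vartriangleleft$-minimal if there is no $J\in\mathcal I$ with $J\vartriangleleft I$. *)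

theory Defs
  imports Main
begin

text \<open>The sequence is a function a :: nat => nat on indices 0..n with a 0 = 0.\<close>

definition feasible :: "(nat \<Rightarrow> nat) \<Rightarrow> nat \<Rightarrow> nat set \<Rightarrow> bool" where
  "feasible a n I \<longleftrightarrow> I \<subseteq> {0..n} \<and> (\<forall>i\<in>I. \<forall>j\<in>I. i < j \<longrightarrow> a i < a j)"

definition maxfeas :: "(nat \<Rightarrow> nat) \<Rightarrow> nat \<Rightarrow> nat set set" where
  "maxfeas a n = {I. feasible a n I \<and> (\<forall>J. feasible a n J \<longrightarrow> card J \<le> card I)}"

text \<open>Patience sorting. A pile is a list of indices, top element first.
  Index i is put on the first pile that is empty or whose top has a-value greater than a i.\<close>

fun pile_insert :: "(nat \<Rightarrow> nat) \<Rightarrow> nat \<Rightarrow> nat list list \<Rightarrow> nat list list" where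
  "pile_insert a i [] = [[i]]"
| "pile_insert a i (p # ps) =
     (if p = [] \<or> a (hd p) > a i then (i # p) # ps else p # pile_insert a i ps)"

definition piles :: "(nat \<Rightarrow> nat) \<Rightarrow> nat \<Rightarrow> nat list list" where
  "piles a n = foldl (\<lambda>ps i. pile_insert a i ps) [] [0..<Suc n]"

text \<open>u is placed strictly below v on pile P_j with 1 <= j <= k (indices are inserted in
  increasing order, so "put there before" means u < v).\<close>

definition placed_below :: "(nat \<Rightarrow> nat) \<Rightarrow> nat \<Rightarrow> nat \<Rightarrow> nat \<Rightarrow> bool" where
  "placed_below a n u v \<longleftrightarrow>
     (\<exists>j. 1 \<le> j \<and> j < length (piles a n) \<and>
          u \<in> set (piles a n ! j) \<and> v \<in> set (piles a n ! j) \<and> u < v)"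

definition tri :: "(nat \<Rightarrow> nat) \<Rightarrow> nat \<Rightarrow> nat set \<Rightarrow> nat set \<Rightarrow> bool" where
  "tri a n I J \<longleftrightarrow> I \<in> maxfeas a n \<and> J \<in> maxfeas a n \<and>
     (\<exists>u v. I - J = {u} \<and> J - I = {v} \<and> placed_below a n u v)"

definition Mset :: "(nat \<Rightarrow> nat) \<Rightarrow> nat \<Rightarrow> nat set \<Rightarrow> nat set set" where
  "Mset a n I = {J. (tri a n)\<^sup>*\<^sup>* J I}"

definition tri_minimal :: "(nat \<Rightarrow> nat) \<Rightarrow> nat \<Rightarrow> nat set \<Rightarrow> bool" where
  "tri_minimal a n I \<longleftrightarrow> I \<in> maxfeas a n \<and> \<not> (\<exists>J \<in> maxfeas a n. tri a n J I)"

end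

theory Submission
  imports Defs "HOL-Library.Confluence"
begin

text \<open>A step J \<lhd> I replaces some v \<in> I by an element u < v, so it decreases the sum of the
  indices and \<lhd> is well-founded. Patience sorting puts the smaller element of an increasing pair
  x < y, a x < a y on an earlier pile than the larger one. Hence, if J1 and J2 arise from I by
  exchanging v1 for u1 and v2 for u2 with v1 \<noteq> v2, then u1, u2 form an increasing pair and
  performing both exchanges gives a set one step below J1 and J2; if v1 = v2, then u1 and u2 lie
  on the same pile and one of J1, J2 is one step below the other. A well-founded relation with
  this diamond property has exactly one minimal element below each point.\<close>

lemma ex1_minimal_below:
  assumes wf: "wfp r"
    and diamond: "\<And>x y z. r y x \<Longrightarrow> r z x \<Longrightarrow> \<exists>u. r\<^sup>=\<^sup>= u y \<and> r\<^sup>=\<^sup>= u z"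
  shows "\<exists>!y. r\<^sup>*\<^sup>* y x \<and> \<not> (\<exists>z. r z y)"
proof (rule ex_ex1I)
  have "x \<in> {y. r\<^sup>*\<^sup>* y x}"
    by simp
  then obtain y where "r\<^sup>*\<^sup>* y x" and "\<forall>z. r z y \<longrightarrow> \<not> r\<^sup>*\<^sup>* z x"
    using wf unfolding wfp_iff_ex_minimal by (metis empty_iff mem_Collect_eq)
  then show "\<exists>y. r\<^sup>*\<^sup>* y x \<and> \<not> (\<exists>z. r z y)"
    by (meson converse_rtranclp_into_rtranclp)
next
  fix y1 y2
  assume y1: "r\<^sup>*\<^sup>* y1 x \<and> \<not> (\<exists>z. r z y1)" and y2: "r\<^sup>*\<^sup>* y2 x \<and> \<not> (\<exists>z. r z y2)"
  have "strong_confluentp r\<inverse>\<inverse>"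
  proof
    fix x y z
    assume "r\<inverse>\<inverse> x y" "r\<inverse>\<inverse> x z"
    then obtain u where "r\<^sup>=\<^sup>= u y" "r\<^sup>=\<^sup>= u z"
      using diamond by blast
    then show "\<exists>u. r\<inverse>\<inverse>\<^sup>*\<^sup>* y u \<and> r\<inverse>\<inverse>\<^sup>=\<^sup>= z u"
      by auto
  qed
  then have "confluentp r\<inverse>\<inverse>"
    by (rule strong_confluentp_imp_confluentp)
  then obtain u where "r\<^sup>*\<^sup>* u y1" "r\<^sup>*\<^sup>* u y2"
    using y1 y2 confluentpD[of "r\<inverse>\<inverse>" x y1 y2] by (auto simp: rtranclp_conversep)
  then show "y1 = y2"
    using y1 y2 by (metis rtranclp.cases)
qed

definition is_pile :: "(nat \<Rightarrow> nat) \<Rightarrow> nat list \<Rightarrow> bool" where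
  "is_pile a p \<longleftrightarrow> p \<noteq> [] \<and> sorted_wrt (\<lambda>x y. y < x \<and> a x < a y) p"

text \<open>The last condition says that no increasing pair leads from the later pile q back to the
  earlier pile p.\<close>

definition pile_before :: "(nat \<Rightarrow> nat) \<Rightarrow> nat list \<Rightarrow> nat list \<Rightarrow> bool" where
  "pile_before a p q \<longleftrightarrow> a (hd p) \<le> a (hd q) \<and> set p \<inter> set q = {} \<and>
     (\<forall>x\<in>set q. \<forall>y\<in>set p. x < y \<longrightarrow> a y \<le> a x)"

definition piles_inv :: "(nat \<Rightarrow> nat) \<Rightarrow> nat list list \<Rightarrow> bool" where
  "piles_inv a ps \<longleftrightarrow> (\<forall>p\<in>set ps. is_pile a p) \<and> sorted_wrt (pile_before a) ps"

lemma set_concat_pile_insert: "set (concat (pile_insert a i ps)) = insert i (set (concat ps))"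
  by (induction ps) auto

lemma set_pile_insert: "set (pile_insert a i ps) \<subseteq> insert [i] (set ps \<union> Cons i ` set ps)"
  by (induction ps) auto

lemma is_pile_hd_le:
  assumes "is_pile a p" "y \<in> set p"
  shows "a (hd p) \<le> a y"
  using assms by (cases p) (auto simp: is_pile_def intro: less_imp_le)

lemma is_pile_less:
  assumes "is_pile a p" "x \<in> set p" "y \<in> set p" "x < y"
  shows "a y < a x"
proof -
  have "sorted_wrt (\<lambda>x y. y < x \<and> a x < a y) p"
    using assms(1) by (simp add: is_pile_def)
  then show ?thesis
    using assms(2-4) by (induction p) force+
qed

lemma piles_inv_pile_insert:
  assumes "piles_inv a ps" "\<forall>x\<in>set (concat ps). x < i"
  shows "piles_inv a (pile_insert a i ps)"
  using assms
proof (induction ps)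
  case Nil
  then show ?case by (simp add: piles_inv_def is_pile_def)
next
  case (Cons p ps)
  then have p: "is_pile a p" "\<forall>y\<in>set p. y < i"
    and ps: "piles_inv a ps" "\<forall>q\<in>set ps. \<forall>x\<in>set q. x < i"
    and before: "\<forall>q\<in>set ps. pile_before a p q"
    by (auto simp: piles_inv_def)
  show ?case
  proof (cases "a i < a (hd p)")
    case True
    have "a i < a y" if "y \<in> set p" for y
      using True is_pile_hd_le[OF p(1) that] by simp
    then have "is_pile a (i # p)"
      using p by (simp add: is_pile_def)
    moreover have "pile_before a (i # p) q" if q_in: "q \<in> set ps" for q
    proof -
      have q: "is_pile a q"
        using ps(1) q_in by (simp add: piles_inv_def)
      have pq: "pile_before a p q"
        using before q_in by blast
      have "a i < a x" if "x \<in> set q" for x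
        using True is_pile_hd_le[OF q that] pq unfolding pile_before_def by linarith
      moreover have "hd q \<in> set q"
        using q by (simp add: is_pile_def)
      moreover have "i \<notin> set q"
        using ps(2) q_in by blast
      ultimately show ?thesis
        using pq unfolding pile_before_def by (auto intro: less_imp_le)
    qed
    ultimately show ?thesis
      using True p(1) ps(1) by (simp add: piles_inv_def)
  next
    case False
    have "pile_before a p q" if q: "q \<in> set (pile_insert a i ps)" for q
    proof -
      consider "q = [i]" | "q \<in> set ps" | q' where "q' \<in> set ps" "q = i # q'"
        using q set_pile_insert[of a i ps] by blast
      then show ?thesis
      proof cases
        case 1
        then show ?thesis
          using False p(2) by (auto simp: pile_before_def)
      next
        case 2
        then show ?thesis
          using before by blast
      next
        case 3
        then have "pile_before a p q'"
          using before by blast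
        then show ?thesis
          using 3 False p(2) by (auto simp: pile_before_def)
      qed
    qed
    moreover have "p \<noteq> []"
      using p(1) by (simp add: is_pile_def)
    ultimately show ?thesis
      using False Cons.IH ps p(1) by (simp add: piles_inv_def)
  qed
qed

lemma piles_inv_foldl:
  "piles_inv a (foldl (\<lambda>ps i. pile_insert a i ps) [] [0..<m]) \<and>
   set (concat (foldl (\<lambda>ps i. pile_insert a i ps) [] [0..<m])) = {..<m}"
proof (induction m)
  case 0
  then show ?case by (simp add: piles_inv_def)
next
  case (Suc m)
  let ?ps = "foldl (\<lambda>ps i. pile_insert a i ps) [] [0..<m]"
  have "\<forall>x\<in>set (concat ?ps). x < m"
    using Suc by simp
  then have "piles_inv a (pile_insert a m ?ps)"
    using Suc piles_inv_pile_insert by blast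
  then show ?case
    using Suc set_concat_pile_insert[of a m ?ps] by (simp add: lessThan_Suc)
qed

lemma piles_inv_piles: "piles_inv a (piles a n)"
  and set_concat_piles: "set (concat (piles a n)) = {0..n}"
  using piles_inv_foldl[of a "Suc n"] by (auto simp: piles_def)

lemma piles_inv_nth_unique:
  assumes "piles_inv a ps" "i < length ps" "j < length ps" "x \<in> set (ps ! i)" "x \<in> set (ps ! j)"
  shows "i = j"
proof (rule ccontr)
  assume "i \<noteq> j"
  then have "pile_before a (ps ! i) (ps ! j) \<or> pile_before a (ps ! j) (ps ! i)"
    using assms(1-3) sorted_wrt_nth_less unfolding piles_inv_def by (metis linorder_neqE_nat)
  then show False
    using assms(4,5) unfolding pile_before_def by blast
qed

lemma piles_inv_nth_ascent:
  assumes "piles_inv a ps" "i < length ps" "j < length ps" "x \<in> set (ps ! i)" "y \<in> set (ps ! j)"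
    and "x < y" "a x < a y"
  shows "i < j"
proof (rule ccontr)
  assume "\<not> i < j"
  then consider "i = j" | "j < i"
    by linarith
  then show False
  proof cases
    case 1
    then show False
      using assms is_pile_less[of a "ps ! j" x y] nth_mem unfolding piles_inv_def by fastforce
  next
    case 2
    then have "pile_before a (ps ! j) (ps ! i)"
      using assms(1,2) sorted_wrt_nth_less unfolding piles_inv_def by blast
    then show False
      using assms(4-7) unfolding pile_before_def by fastforce
  qed
qed

lemma placed_below_less:
  assumes "placed_below a n u v"
  shows "u < v" "a v < a u" "v \<le> n"
proof -
  obtain j where j: "j < length (piles a n)" "u \<in> set (piles a n ! j)" "v \<in> set (piles a n ! j)"
    and "u < v"
    using assms unfolding placed_below_def by blast
  then show "u < v" "a v < a u"
    using piles_inv_piles[of a n] is_pile_less nth_mem unfolding piles_inv_def by blast+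
  show "v \<le> n"
    using j set_concat_piles[of a n] nth_mem by fastforce
qed

lemma placed_below_same_pile:
  assumes "placed_below a n u v" "placed_below a n w v" "u < w"
  shows "placed_below a n u w"
  using assms piles_inv_nth_unique[OF piles_inv_piles] unfolding placed_below_def by metis

lemma pile_index_exists:
  obtains rank :: "nat \<Rightarrow> nat"
  where "\<And>x y. x \<le> n \<Longrightarrow> y \<le> n \<Longrightarrow> x < y \<Longrightarrow> a x < a y \<Longrightarrow> rank x < rank y"
    and "\<And>u v. placed_below a n u v \<Longrightarrow> rank u = rank v"
proof -
  have "\<exists>j. j < length (piles a n) \<and> x \<in> set (piles a n ! j)" if x: "x \<le> n" for x
  proof -
    have "x \<in> set (concat (piles a n))"
      using x by (simp only: set_concat_piles) simp
    then obtain q where "q \<in> set (piles a n)" "x \<in> set q"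
      by auto
    then show ?thesis
      by (metis in_set_conv_nth)
  qed
  then obtain rank
    where rank: "\<And>x. x \<le> n \<Longrightarrow> rank x < length (piles a n) \<and> x \<in> set (piles a n ! rank x)"
    by metis
  show thesis
  proof (rule that)
    show "rank x < rank y" if "x \<le> n" "y \<le> n" "x < y" "a x < a y" for x y
      using that rank piles_inv_nth_ascent[OF piles_inv_piles] by blast
    show "rank u = rank v" if pb: "placed_below a n u v" for u v
    proof -
      obtain j where "j < length (piles a n)" "u \<in> set (piles a n ! j)" "v \<in> set (piles a n ! j)"
        using pb unfolding placed_below_def by blast
      moreover have "u \<le> n" "v \<le> n"
        using placed_below_less[OF pb] by simp_all
      ultimately show ?thesis
        using rank piles_inv_nth_unique[OF piles_inv_piles] by metis
    qed
  qed
qed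

definition comparable :: "(nat \<Rightarrow> nat) \<Rightarrow> nat \<Rightarrow> nat \<Rightarrow> bool" where
  "comparable a x y \<longleftrightarrow> (x < y \<and> a x < a y) \<or> (y < x \<and> a y < a x)"

lemma comparable_commute: "comparable a x y \<longleftrightarrow> comparable a y x"
  unfolding comparable_def by auto

lemma feasible_comparable:
  "feasible a n I \<Longrightarrow> x \<in> I \<Longrightarrow> y \<in> I \<Longrightarrow> x \<noteq> y \<Longrightarrow> comparable a x y"
  unfolding feasible_def comparable_def by (metis linorder_neqE_nat)

lemma feasibleI_comparable:
  "I \<subseteq> {0..n} \<Longrightarrow> (\<And>x y. x \<in> I \<Longrightarrow> y \<in> I \<Longrightarrow> x \<noteq> y \<Longrightarrow> comparable a x y) \<Longrightarrow> feasible a n I"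
  unfolding feasible_def comparable_def by (metis less_asym)

lemma exchange_ascending:
  fixes rank :: "nat \<Rightarrow> nat"
  assumes mono: "\<And>x y. x \<le> N \<Longrightarrow> y \<le> N \<Longrightarrow> x < y \<Longrightarrow> a x < a y \<Longrightarrow> rank x < rank y"
    and bounded: "u1 \<le> N" "u2 \<le> N" "v1 \<le> N" "v2 \<le> N"
    and "v1 < v2" "comparable a v1 v2" "comparable a u1 v2" "comparable a u2 v1"
    and "u1 < v1" "a v2 < a u2" "rank u1 = rank v1" "rank u2 = rank v2"
  shows "u1 < u2 \<and> a u1 < a u2"
proof -
  have "rank v1 < rank v2"
    using assms by (auto simp: comparable_def)
  then have "u1 < v2 \<and> a u1 < a v2" "v1 < u2 \<and> a v1 < a u2"
    using assms by (auto simp: comparable_def dest: mono)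
  then show ?thesis
    using assms by linarith
qed

lemma placed_below_exchange:
  assumes "feasible a n I" "v1 \<in> I" "v2 \<in> I" "v1 \<noteq> v2" "u1 \<notin> I" "u2 \<notin> I"
    and "feasible a n (insert u1 (I - {v1}))" "feasible a n (insert u2 (I - {v2}))"
    and "placed_below a n u1 v1" "placed_below a n u2 v2"
  shows "comparable a u1 u2"
proof -
  obtain rank :: "nat \<Rightarrow> nat"
    where mono: "\<And>x y. x \<le> n \<Longrightarrow> y \<le> n \<Longrightarrow> x < y \<Longrightarrow> a x < a y \<Longrightarrow> rank x < rank y"
      and same: "\<And>u v. placed_below a n u v \<Longrightarrow> rank u = rank v"
    using pile_index_exists[of n a] by blast
  note below = placed_below_less[OF assms(9)] placed_below_less[OF assms(10)]
  have bounded: "u1 \<le> n" "u2 \<le> n" "v1 \<le> n" "v2 \<le> n"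
    using below by simp_all
  have c: "comparable a v1 v2" "comparable a u1 v2" "comparable a u2 v1"
    using feasible_comparable[OF assms(1)] feasible_comparable[OF assms(7)]
      feasible_comparable[OF assms(8)] assms(2-6) by blast+
  have rank: "rank u1 = rank v1" "rank u2 = rank v2"
    using same assms(9,10) by blast+
  show ?thesis
  proof (cases "v1 < v2")
    case True
    then have "u1 < u2 \<and> a u1 < a u2"
      using exchange_ascending[OF mono bounded True c below(1,5) rank] by blast
    then show ?thesis
      unfolding comparable_def by blast
  next
    case False
    then have "v2 < v1"
      using assms(4) by simp
    moreover have "comparable a v2 v1"
      using c(1) comparable_commute by blast
    ultimately have "u2 < u1 \<and> a u2 < a u1"
      using exchange_ascending[OF mono bounded(2,1,4,3) _ _ c(3,2) below(4,2) rank(2,1)] by blast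
    then show ?thesis
      unfolding comparable_def by blast
  qed
qed

lemma maxfeas_finite: "I \<in> maxfeas a n \<Longrightarrow> finite I"
  unfolding maxfeas_def feasible_def by (auto intro: finite_subset)

lemma triE:
  assumes "tri a n J I"
  obtains u v where "I \<in> maxfeas a n" "J \<in> maxfeas a n" "v \<in> I" "u \<notin> I"
    "J = insert u (I - {v})" "placed_below a n u v"
proof -
  obtain u v where "I \<in> maxfeas a n" "J \<in> maxfeas a n" "J - I = {u}" "I - J = {v}"
    "placed_below a n u v"
    using assms unfolding tri_def by blast
  moreover from this(3,4) have "v \<in> I" "u \<notin> I" "J = insert u (I - {v})"
    by blast+
  ultimately show thesis
    using that by blast
qed

lemma triI:
  assumes "J - I = {u}" "I - J = {v}" "placed_below a n u v" "J \<in> maxfeas a n" "I \<in> maxfeas a n"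
  shows "tri a n J I"
  unfolding tri_def using assms by blast

lemma wfp_tri: "wfp (tri a n)"
proof (rule wfp_if_convertible_to_nat)
  fix J I
  assume "tri a n J I"
  then obtain u v where "I \<in> maxfeas a n" "J \<in> maxfeas a n" "v \<in> I" "u \<notin> I"
    "J = insert u (I - {v})" "placed_below a n u v"
    by (rule triE)
  moreover have "finite I"
    using \<open>I \<in> maxfeas a n\<close> by (rule maxfeas_finite)
  ultimately show "\<Sum>J < \<Sum>I"
    using placed_below_less(1) by (simp add: sum.remove)
qed

lemma exchange_two_maxfeas:
  assumes "I \<in> maxfeas a n"
    and "insert u1 (I - {v1}) \<in> maxfeas a n" "insert u2 (I - {v2}) \<in> maxfeas a n"
    and "v1 \<in> I" "v2 \<in> I" "v1 \<noteq> v2" "u1 \<notin> I" "u2 \<notin> I" "comparable a u1 u2"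
  shows "insert u1 (insert u2 (I - {v1, v2})) \<in> maxfeas a n"
proof -
  let ?K = "insert u1 (insert u2 (I - {v1, v2}))"
  have "u1 \<noteq> u2"
    using assms(9) by (auto simp: comparable_def)
  have J1: "feasible a n (insert u1 (I - {v1}))" and J2: "feasible a n (insert u2 (I - {v2}))"
    using assms(2,3) by (simp_all add: maxfeas_def)
  have "comparable a x y" if x: "x \<in> ?K" and y: "y \<in> ?K" and "x \<noteq> y" for x y
  proof -
    consider "x \<in> insert u1 (I - {v1})" "y \<in> insert u1 (I - {v1})"
      | "x \<in> insert u2 (I - {v2})" "y \<in> insert u2 (I - {v2})"
      | "x = u1" "y = u2" | "x = u2" "y = u1"
      using x y by blast
    then show ?thesis
      using feasible_comparable[OF J1] feasible_comparable[OF J2] \<open>x \<noteq> y\<close> assms(9)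
        comparable_commute by cases blast+
  qed
  moreover have "?K \<subseteq> {0..n}"
    using J1 J2 unfolding feasible_def by blast
  ultimately have "feasible a n ?K"
    by (blast intro: feasibleI_comparable)
  moreover have "card ?K = card I"
  proof -
    have fin: "finite I"
      using assms(1) by (rule maxfeas_finite)
    have "{v1, v2} \<subseteq> I" "card {v1, v2} = 2"
      using assms(4-6) by simp_all
    then have "card (I - {v1, v2}) + 2 = card I"
      using fin card_Diff_subset[of "{v1, v2}" I] card_mono[OF fin, of "{v1, v2}"] by simp
    moreover have "card ?K = card (I - {v1, v2}) + 2"
      using fin assms(7,8) \<open>u1 \<noteq> u2\<close> by simp
    ultimately show ?thesis
      by simp
  qed
  ultimately show ?thesis
    using assms(1) unfolding maxfeas_def by simp
qed

lemma tri_diamond: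
  assumes "tri a n J1 I" "tri a n J2 I"
  shows "\<exists>K. (tri a n)\<^sup>=\<^sup>= K J1 \<and> (tri a n)\<^sup>=\<^sup>= K J2"
proof -
  obtain u1 v1 where I: "I \<in> maxfeas a n"
    and J1: "J1 \<in> maxfeas a n" "v1 \<in> I" "u1 \<notin> I" "J1 = insert u1 (I - {v1})"
      "placed_below a n u1 v1"
    using assms(1) by (rule triE)
  obtain u2 v2 where "I \<in> maxfeas a n"
    and J2: "J2 \<in> maxfeas a n" "v2 \<in> I" "u2 \<notin> I" "J2 = insert u2 (I - {v2})"
      "placed_below a n u2 v2"
    using assms(2) by (rule triE)
  show ?thesis
  proof (cases "v1 = v2")
    case True
    consider "u1 = u2" | "u1 < u2" | "u2 < u1"
      by linarith
    then show ?thesis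
    proof cases
      case 1
      then show ?thesis
        using J1(4) J2(4) True by auto
    next
      case 2
      have "J1 - J2 = {u1}" "J2 - J1 = {u2}"
        using J1(3,4) J2(3,4) True 2 by auto
      moreover have "placed_below a n u1 u2"
        using J1(5) J2(5) True 2 by (blast intro: placed_below_same_pile)
      ultimately have "tri a n J1 J2"
        using J1(1) J2(1) by (rule triI)
      then show ?thesis
        by blast
    next
      case 3
      have "J2 - J1 = {u2}" "J1 - J2 = {u1}"
        using J1(3,4) J2(3,4) True 3 by auto
      moreover have "placed_below a n u2 u1"
        using J1(5) J2(5) True 3 by (blast intro: placed_below_same_pile)
      ultimately have "tri a n J2 J1"
        using J2(1) J1(1) by (rule triI)
      then show ?thesis
        by blast
    qed
  next
    case False
    let ?K = "insert u1 (insert u2 (I - {v1, v2}))"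
    have "comparable a u1 u2"
      using I J1 J2 False by (intro placed_below_exchange[of a n I]) (simp_all add: maxfeas_def)
    then have K: "?K \<in> maxfeas a n"
      using I J1 J2 False by (intro exchange_two_maxfeas) simp_all
    have "?K - J1 = {u2}" "J1 - ?K = {v2}" "?K - J2 = {u1}" "J2 - ?K = {v1}"
      using J1(2-4) J2(2-4) False \<open>comparable a u1 u2\<close> by (auto simp: comparable_def)
    then have "tri a n ?K J1" "tri a n ?K J2"
      using K J1(1,5) J2(1,5) by (blast intro: triI)+
    then show ?thesis
      by blast
  qed
qed

lemma rtranclp_tri_maxfeas: "(tri a n)\<^sup>*\<^sup>* J I \<Longrightarrow> I \<in> maxfeas a n \<Longrightarrow> J \<in> maxfeas a n"
  unfolding tri_def by (induction rule: converse_rtranclp_induct) simp_all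

theorem lemma2:
  fixes a :: "nat \<Rightarrow> nat" and n :: nat and I :: "nat set"
  assumes "a 0 = 0"
    and "inj_on a {1..n}"
    and "a ` {1..n} \<subseteq> {1..n}"
    and "I \<in> maxfeas a n"
  shows "\<exists>!J. J \<in> Mset a n I \<and> tri_minimal a n J"
proof -
  have "J \<in> Mset a n I \<and> tri_minimal a n J \<longleftrightarrow> (tri a n)\<^sup>*\<^sup>* J I \<and> \<not> (\<exists>K. tri a n K J)" for J
    using rtranclp_tri_maxfeas[OF _ assms(4), of J]
    unfolding Mset_def tri_minimal_def tri_def by blast
  then show ?thesis
    using ex1_minimal_below[of "tri a n" I, OF wfp_tri tri_diamond] by simp
qed

end
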